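(* For any $k,\Delta \in \mathbb{N}$, there exists an $L\in\mathbb{N}$ such that the following holds. If $G$ is a finite graph with $f(G) < k$ and maximum degree at most $\Delta$, then $G$ contains at most $L$ vertices of degree at least $k-1$.
   Context: All graphs are finite and simple. For a graph $G$, $f(G)$ denotes the largest integer $k$ for which $G$ contains an induced subgraph in which exactly $k$ distinct values occur among the vertex degrees (i.e., an induced subgraph with $k$ distinct degrees). *)

theory Defs
  imports Main
begin

text \<open>A finite simple graph is given by a finite vertex set V and an edge relation E
  which is symmetric and irreflexive on V. Only edges with both ends in V matter.\<close>

definition simple_graph :: "'a set \<Rightarrow> ('a \<Rightarrow> 'a \<Rightarrow> bool) \<Rightarrow> bool" where
  "simple_graph V E \<longleftrightarrow> finite V \<and> (\<forall>u\<in>V. \<forall>v\<in>V. E u v \<longleftrightarrow> E v u) \<and> (\<forall>v\<in>V. \<not> E v v)"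

definition degree_in :: "'a set \<Rightarrow> ('a \<Rightarrow> 'a \<Rightarrow> bool) \<Rightarrow> 'a \<Rightarrow> nat" where
  "degree_in S E v = card {u \<in> S. E v u}"

definition num_distinct_degrees :: "'a set \<Rightarrow> ('a \<Rightarrow> 'a \<Rightarrow> bool) \<Rightarrow> nat" where
  "num_distinct_degrees S E = card (degree_in S E ` S)"

definition f_graph :: "'a set \<Rightarrow> ('a \<Rightarrow> 'a \<Rightarrow> bool) \<Rightarrow> nat" where
  "f_graph V E = Max {num_distinct_degrees S E | S. S \<subseteq> V}"

definition max_degree_le :: "'a set \<Rightarrow> ('a \<Rightarrow> 'a \<Rightarrow> bool) \<Rightarrow> nat \<Rightarrow> bool" where
  "max_degree_le V E D \<longleftrightarrow> (\<forall>v\<in>V. degree_in V E v \<le> D)"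

end

theory Submission
  imports Defs
begin

text \<open>If G has many vertices of degree at least k - 1, then, as balls of radius 2 have at
  most 1 + \<Delta> + \<Delta>^2 vertices, a greedy choice yields k of them pairwise at distance at
  least 3. Keeping the i-th of these together with exactly i of its neighbours gives k
  stars with no edges between them, so the induced subgraph on their union realises
  the k distinct degrees 0, ..., k - 1 at the centres, i.e. f(G) \<ge> k.\<close>

definition dist_le_2 :: "'a set \<Rightarrow> ('a \<Rightarrow> 'a \<Rightarrow> bool) \<Rightarrow> 'a \<Rightarrow> 'a \<Rightarrow> bool" where
  "dist_le_2 V E v u \<longleftrightarrow> u = v \<or> E v u \<or> (\<exists>w\<in>V. E v w \<and> E w u)"

definition scattered :: "'a set \<Rightarrow> ('a \<Rightarrow> 'a \<Rightarrow> bool) \<Rightarrow> 'a set \<Rightarrow> bool" where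
  "scattered V E T \<longleftrightarrow> (\<forall>u\<in>T. \<forall>v\<in>T. u \<noteq> v \<longrightarrow> \<not> dist_le_2 V E u v)"

lemma dist_le_2_sym:
  assumes "simple_graph V E" "u \<in> V" "v \<in> V"
  shows "dist_le_2 V E v u \<longleftrightarrow> dist_le_2 V E u v"
  using assms unfolding dist_le_2_def simple_graph_def by blast

lemma card_dist_le_2_ball:
  assumes sg: "simple_graph V E" and md: "max_degree_le V E D" and v: "v \<in> V"
  shows "card {u\<in>V. dist_le_2 V E v u} \<le> 1 + D + D * D"
proof -
  define N where "N w = {u\<in>V. E w u}" for w
  have fin_N: "finite (N w)" for w
    using sg by (simp add: N_def simple_graph_def)
  have card_N: "w \<in> V \<Longrightarrow> card (N w) \<le> D" for w
    using md by (simp add: max_degree_le_def degree_in_def N_def)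
  have "card (\<Union>w\<in>N v. N w) \<le> (\<Sum>w\<in>N v. card (N w))"
    using fin_N card_UN_le by blast
  also have "\<dots> \<le> card (N v) * D"
    using card_N sum_bounded_above[of "N v" "\<lambda>w. card (N w)" D] by (auto simp: N_def)
  also have "\<dots> \<le> D * D"
    using card_N[OF v] by simp
  finally have card_N2: "card (\<Union>w\<in>N v. N w) \<le> D * D" .
  have "{u\<in>V. dist_le_2 V E v u} \<subseteq> {v} \<union> N v \<union> (\<Union>w\<in>N v. N w)"
    by (auto simp: dist_le_2_def N_def)
  then have "card {u\<in>V. dist_le_2 V E v u} \<le> card ({v} \<union> N v \<union> (\<Union>w\<in>N v. N w))"
    by (rule card_mono[rotated]) (use fin_N in auto)
  also have "\<dots> \<le> card ({v} \<union> N v) + card (\<Union>w\<in>N v. N w)"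
    by (rule card_Un_le)
  also have "\<dots> \<le> 1 + card (N v) + card (\<Union>w\<in>N v. N w)"
    using card_Un_le[of "{v}" "N v"] by simp
  finally show ?thesis
    using card_N2 card_N[OF v] by simp
qed

lemma exists_independent_subset:
  fixes R :: "'a \<Rightarrow> 'a \<Rightarrow> bool"
  assumes "finite B"
    and "\<And>v. v \<in> B \<Longrightarrow> R v v"
    and "\<And>u v. u \<in> B \<Longrightarrow> v \<in> B \<Longrightarrow> R u v \<Longrightarrow> R v u"
    and "\<And>v. v \<in> B \<Longrightarrow> card {u\<in>B. R v u} \<le> b"
    and "n * b < card B"
  shows "\<exists>T\<subseteq>B. card T = n \<and> (\<forall>u\<in>T. \<forall>v\<in>T. u \<noteq> v \<longrightarrow> \<not> R u v)"
  using assms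
proof (induction n arbitrary: B)
  case 0
  show ?case by (intro exI[of _ "{}"]) simp
next
  case (Suc n)
  then obtain v where v: "v \<in> B"
    by fastforce
  define X where "X = {u\<in>B. R v u}"
  have "card B - card X \<le> card (B - X)"
    using \<open>finite B\<close> by (simp add: X_def diff_card_le_card_Diff)
  then have "n * b < card (B - X)"
    using Suc.prems(5) Suc.prems(4)[OF v] by (simp add: X_def)
  moreover have "card {u\<in>B - X. R w u} \<le> b" if "w \<in> B - X" for w
    using Suc.prems(4)[of w] that card_mono[of "{u\<in>B. R w u}" "{u\<in>B - X. R w u}"]
      \<open>finite B\<close> by force
  ultimately obtain T where T: "T \<subseteq> B - X" "card T = n" "\<forall>u\<in>T. \<forall>w\<in>T. u \<noteq> w \<longrightarrow> \<not> R u w"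
    using Suc.IH[of "B - X"] Suc.prems(1-3) by blast
  have "v \<in> X"
    using v Suc.prems(2)[OF v] by (simp add: X_def)
  then have "v \<notin> T"
    using T(1) by blast
  have "finite T"
    using T(1) \<open>finite B\<close> finite_subset by blast
  have far_v: "\<not> R v u \<and> \<not> R u v" if "u \<in> T" for u
    using that T(1) Suc.prems(3)[OF _ v] by (auto simp: X_def)
  show ?case
  proof (intro exI[of _ "insert v T"] conjI)
    show "insert v T \<subseteq> B" "card (insert v T) = Suc n"
      using T v \<open>v \<notin> T\<close> \<open>finite T\<close> by auto
    show "\<forall>u\<in>insert v T. \<forall>w\<in>insert v T. u \<noteq> w \<longrightarrow> \<not> R u w"
      using T(3) far_v by blast
  qed
qed

lemma exists_scattered_subset:
  assumes sg: "simple_graph V E" and md: "max_degree_le V E D"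
    and BV: "B \<subseteq> V" and big: "n * (1 + D + D * D) < card B"
  shows "\<exists>T\<subseteq>B. card T = n \<and> scattered V E T"
proof -
  have fin_V: "finite V"
    using sg by (simp add: simple_graph_def)
  have ball: "card {u\<in>B. dist_le_2 V E v u} \<le> 1 + D + D * D" if "v \<in> B" for v
  proof -
    have "card {u\<in>B. dist_le_2 V E v u} \<le> card {u\<in>V. dist_le_2 V E v u}"
      using BV fin_V by (intro card_mono) auto
    then show ?thesis
      using card_dist_le_2_ball[OF sg md] that BV by force
  qed
  have sym: "dist_le_2 V E v u" if "u \<in> B" "v \<in> B" "dist_le_2 V E u v" for u v
    using that BV dist_le_2_sym[OF sg] by blast
  have refl: "dist_le_2 V E v v" for v
    by (simp add: dist_le_2_def)
  show ?thesis
    using exists_independent_subset[of B "dist_le_2 V E", OF _ refl sym ball big]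
      finite_subset[OF BV fin_V]
    by (simp add: scattered_def)
qed

lemma degree_in_union_of_stars:
  assumes sg: "simple_graph V E" and "T \<subseteq> V" and far: "scattered V E T"
    and leaves: "\<And>w. w \<in> T \<Longrightarrow> A w \<subseteq> {u\<in>V. E w u}"
    and v: "v \<in> T"
  shows "degree_in (\<Union>w\<in>T. insert w (A w)) E v = card (A v)"
proof -
  have "{u \<in> (\<Union>w\<in>T. insert w (A w)). E v u} = A v"
  proof (intro equalityI subsetI)
    fix u assume "u \<in> {u \<in> (\<Union>w\<in>T. insert w (A w)). E v u}"
    then obtain w where w: "w \<in> T" "u \<in> insert w (A w)" and vu: "E v u"
      by auto
    have "u \<in> V" "v \<in> V" "w \<in> V"
      using w v leaves assms(2) by auto
    show "u \<in> A v"
    proof (cases "w = v")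
      case True
      then show ?thesis using w vu sg \<open>v \<in> V\<close> by (auto simp: simple_graph_def)
    next
      case False
      then have "\<not> dist_le_2 V E v w"
        using far v w(1) by (auto simp: scattered_def)
      moreover have "u = w \<or> E u w"
        using w leaves[of w] sg \<open>u \<in> V\<close> \<open>w \<in> V\<close> by (auto simp: simple_graph_def)
      ultimately show ?thesis
        using vu \<open>u \<in> V\<close> by (auto simp: dist_le_2_def)
    qed
  qed (use leaves v in auto)
  then show ?thesis
    by (simp add: degree_in_def)
qed

lemma num_distinct_degrees_le_f_graph:
  assumes "finite V" "S \<subseteq> V"
  shows "num_distinct_degrees S E \<le> f_graph V E"
proof -
  have "{num_distinct_degrees S E | S. S \<subseteq> V} = (\<lambda>S. num_distinct_degrees S E) ` Pow V"
    by auto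
  then have "finite {num_distinct_degrees S E | S. S \<subseteq> V}"
    using assms(1) by simp
  then show ?thesis
    unfolding f_graph_def using assms(2) by (blast intro: Max_ge)
qed

lemma card_scattered_le_f_graph:
  assumes sg: "simple_graph V E" and TV: "T \<subseteq> V" and far: "scattered V E T"
    and g: "inj_on g T" "\<And>v. v \<in> T \<Longrightarrow> g v \<le> degree_in V E v"
  shows "card T \<le> f_graph V E"
proof -
  have "\<exists>A. A \<subseteq> {u\<in>V. E v u} \<and> card A = g v" if "v \<in> T" for v
    using g(2)[OF that] unfolding degree_in_def by (meson obtain_subset_with_card_n)
  then obtain A where A: "\<And>v. v \<in> T \<Longrightarrow> A v \<subseteq> {u\<in>V. E v u} \<and> card (A v) = g v"
    by metis
  define H where "H = (\<Union>w\<in>T. insert w (A w))"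
  have HV: "H \<subseteq> V" and TH: "T \<subseteq> H"
    using A TV by (auto simp: H_def)
  have fin_H: "finite H"
    using HV sg finite_subset by (auto simp: simple_graph_def)
  have "card T = card (g ` T)"
    using g(1) by (simp add: card_image)
  also have "g ` T = degree_in H E ` T"
    unfolding H_def using degree_in_union_of_stars[OF sg TV far, of A] A
    by (intro image_cong) simp_all
  also have "card \<dots> \<le> num_distinct_degrees H E"
    unfolding num_distinct_degrees_def using fin_H TH by (intro card_mono) auto
  also have "\<dots> \<le> f_graph V E"
    using sg HV by (intro num_distinct_degrees_le_f_graph) (auto simp: simple_graph_def)
  finally show ?thesis .
qed

lemma card_scattered_le_f_graph_if_degrees_ge:
  assumes "simple_graph V E" "T \<subseteq> V" "scattered V E T"
    and deg: "\<And>v. v \<in> T \<Longrightarrow> card T - 1 \<le> degree_in V E v"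
  shows "card T \<le> f_graph V E"
proof -
  have "finite T"
    using assms(1,2) finite_subset by (auto simp: simple_graph_def)
  then obtain g where g: "bij_betw g T {..<card T}"
    using ex_bij_betw_finite_nat[of T] by (auto simp: atLeast0LessThan)
  have "g v \<le> degree_in V E v" if "v \<in> T" for v
    using bij_betw_apply[OF g that] deg[OF that] by simp
  then show ?thesis
    using g by (intro card_scattered_le_f_graph[OF assms(1-3)]) (auto simp: bij_betw_def)
qed

theorem proposition2p2:
  fixes k \<Delta> :: nat
  shows "\<exists>L::nat. \<forall>(V::nat set) E.
           simple_graph V E \<longrightarrow> f_graph V E < k \<longrightarrow> max_degree_le V E \<Delta> \<longrightarrow>
           card {v \<in> V. k - 1 \<le> degree_in V E v} \<le> L"
proof (intro exI[of _ "k * (1 + \<Delta> + \<Delta> * \<Delta>)"] allI impI)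
  fix V :: "nat set" and E
  assume sg: "simple_graph V E" and f: "f_graph V E < k" and md: "max_degree_le V E \<Delta>"
  define B where "B = {v \<in> V. k - 1 \<le> degree_in V E v}"
  show "card B \<le> k * (1 + \<Delta> + \<Delta> * \<Delta>)"
  proof (rule ccontr)
    assume "\<not> ?thesis"
    moreover have "B \<subseteq> V"
      by (auto simp: B_def)
    ultimately obtain T where T: "T \<subseteq> B" "card T = k" "scattered V E T"
      using exists_scattered_subset[OF sg md, of B k] by auto
    then have "k \<le> f_graph V E"
      using card_scattered_le_f_graph_if_degrees_ge[OF sg, of T] by (auto simp: B_def)
    with f show False by simp
  qed
qed

end
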